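(* Let $\mathfrak{g}$ be a finite-dimensional complete Lie algebra over a field $K$ of characteristic zero. Then every CPA-structure on $\mathfrak{g}$ is inner.
   Context: A Lie algebra is complete if its center is trivial and all its derivations are inner. A CPA-structure on $\mathfrak{g}$ is a bilinear product $x\cdot y$ satisfying, for all $x,y,z$: $x\cdot y=y\cdot x$; $[x,y]\cdot z=x\cdot(y\cdot z)-y\cdot(x\cdot z)$; $x\cdot[y,z]=[x\cdot y,z]+[y,x\cdot z]$. It is inner if $x\cdot y=[\phi(x),y]$ for all $x,y$ for some Lie algebra homomorphism $\phi:\mathfrak{g}\to\mathfrak{g}$. *)

theory Defs
  imports Complex_Main
begin

definition lie_algebra :: "('k::field \<Rightarrow> 'v::ab_group_add \<Rightarrow> 'v) \<Rightarrow> ('v \<Rightarrow> 'v \<Rightarrow> 'v) \<Rightarrow> bool" where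
  "lie_algebra scale br \<longleftrightarrow>
     Vector_Spaces.vector_space scale \<and>
     (\<forall>x y z. br (x + y) z = br x z + br y z) \<and>
     (\<forall>x y z. br x (y + z) = br x y + br x z) \<and>
     (\<forall>a x y. br (scale a x) y = scale a (br x y)) \<and>
     (\<forall>a x y. br x (scale a y) = scale a (br x y)) \<and>
     (\<forall>x. br x x = 0) \<and>
     (\<forall>x y z. br x (br y z) + br y (br z x) + br z (br x y) = 0)"

definition finite_dim :: "('k::field \<Rightarrow> 'v::ab_group_add \<Rightarrow> 'v) \<Rightarrow> bool" where
  "finite_dim scale \<longleftrightarrow> (\<exists>B. finite B \<and> module.span scale B = UNIV)"

definition lie_derivation :: "('k::field \<Rightarrow> 'v::ab_group_add \<Rightarrow> 'v) \<Rightarrow> ('v \<Rightarrow> 'v \<Rightarrow> 'v) \<Rightarrow> ('v \<Rightarrow> 'v) \<Rightarrow> bool" where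
  "lie_derivation scale br D \<longleftrightarrow>
     Vector_Spaces.linear scale scale D \<and> (\<forall>x y. D (br x y) = br (D x) y + br x (D y))"

definition inner_derivation :: "('v \<Rightarrow> 'v \<Rightarrow> 'v) \<Rightarrow> ('v \<Rightarrow> 'v) \<Rightarrow> bool" where
  "inner_derivation br D \<longleftrightarrow> (\<exists>a. D = (\<lambda>x. br a x))"

definition complete_lie :: "('k::field \<Rightarrow> 'v::ab_group_add \<Rightarrow> 'v) \<Rightarrow> ('v \<Rightarrow> 'v \<Rightarrow> 'v) \<Rightarrow> bool" where
  "complete_lie scale br \<longleftrightarrow>
     (\<forall>z. (\<forall>x. br z x = 0) \<longrightarrow> z = 0) \<and>
     (\<forall>D. lie_derivation scale br D \<longrightarrow> inner_derivation br D)"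

definition lie_hom :: "('k::field \<Rightarrow> 'v::ab_group_add \<Rightarrow> 'v) \<Rightarrow> ('v \<Rightarrow> 'v \<Rightarrow> 'v) \<Rightarrow> ('v \<Rightarrow> 'v) \<Rightarrow> bool" where
  "lie_hom scale br \<phi> \<longleftrightarrow>
     Vector_Spaces.linear scale scale \<phi> \<and> (\<forall>x y. \<phi> (br x y) = br (\<phi> x) (\<phi> y))"

definition cpa_structure :: "('k::field \<Rightarrow> 'v::ab_group_add \<Rightarrow> 'v) \<Rightarrow> ('v \<Rightarrow> 'v \<Rightarrow> 'v) \<Rightarrow> ('v \<Rightarrow> 'v \<Rightarrow> 'v) \<Rightarrow> bool" where
  "cpa_structure scale br pr \<longleftrightarrow>
     (\<forall>x y z. pr (x + y) z = pr x z + pr y z) \<and>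
     (\<forall>x y z. pr x (y + z) = pr x y + pr x z) \<and>
     (\<forall>a x y. pr (scale a x) y = scale a (pr x y)) \<and>
     (\<forall>a x y. pr x (scale a y) = scale a (pr x y)) \<and>
     (\<forall>x y. pr x y = pr y x) \<and>
     (\<forall>x y z. pr (br x y) z = pr x (pr y z) - pr y (pr x z)) \<and>
     (\<forall>x y z. pr x (br y z) = br (pr x y) z + br y (pr x z))"

definition inner_cpa :: "('k::field \<Rightarrow> 'v::ab_group_add \<Rightarrow> 'v) \<Rightarrow> ('v \<Rightarrow> 'v \<Rightarrow> 'v) \<Rightarrow> ('v \<Rightarrow> 'v \<Rightarrow> 'v) \<Rightarrow> bool" where
  "inner_cpa scale br pr \<longleftrightarrow> (\<exists>\<phi>. lie_hom scale br \<phi> \<and> (\<forall>x y. pr x y = br (\<phi> x) y))"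

end

theory Submission
  imports Defs
begin

text \<open>The axiom \<open>x\<cdot>[y,z] = [x\<cdot>y,z] + [y,x\<cdot>z]\<close> says that each left multiplication \<open>L(x)\<close> is a
derivation, so by completeness \<open>L(x) = ad(\<phi>(x))\<close> for a unique \<open>\<phi>(x)\<close>; uniqueness holds because
the centre is trivial, i.e. \<open>ad\<close> is injective. Injectivity of \<open>ad\<close> then transports linearity of
\<open>L\<close> and the identity \<open>L([x,y]) = [L(x),L(y)]\<close> to \<open>\<phi>\<close>, since \<open>ad\<close> is itself a Lie homomorphism
by the Jacobi identity.\<close>

lemma lie_algebra_bracket_antisym:
  assumes "lie_algebra scale br"
  shows "br x y = - br y x"
proof -
  have alt: "br w w = 0" for w using assms by (simp add: lie_algebra_def)
  have "br (x + y) (x + y) = br x x + br y x + (br x y + br y y)"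
    using assms unfolding lie_algebra_def by (metis (no_types))
  then have "br y x + br x y = 0" by (simp add: alt)
  then show ?thesis by (simp add: eq_neg_iff_add_eq_0 add.commute)
qed

lemma lie_algebra_bracket_diff_left:
  assumes "lie_algebra scale br"
  shows "br (u - v) z = br u z - br v z"
  using assms unfolding lie_algebra_def by (metis add_diff_cancel eq_diff_eq)

lemma lie_algebra_bracket_minus_right:
  assumes "lie_algebra scale br"
  shows "br u (- w) = - br u w"
  using assms unfolding lie_algebra_def by (metis add.right_inverse add_eq_0_iff2 add_0 add_0_right)

lemma lie_algebra_ad_bracket:
  assumes "lie_algebra scale br"
  shows "br (br a b) z = br a (br b z) - br b (br a z)"
proof -
  have "br a (br b z) + br b (br z a) + br z (br a b) = 0"
    using assms by (simp add: lie_algebra_def)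
  moreover have "br b (br z a) = - br b (br a z)"
    using lie_algebra_bracket_antisym[OF assms, of z a] lie_algebra_bracket_minus_right[OF assms] by simp
  moreover have "br z (br a b) = - br (br a b) z"
    by (rule lie_algebra_bracket_antisym[OF assms])
  ultimately show ?thesis by (simp add: eq_diff_eq add.commute)
qed

lemma centerless_ad_injective:
  assumes "lie_algebra scale br" and "\<forall>z. (\<forall>x. br z x = 0) \<longrightarrow> z = 0"
    and "\<And>z. br u z = br v z"
  shows "u = v"
proof -
  have "\<forall>z. br (u - v) z = 0" using assms(3) by (simp add: lie_algebra_bracket_diff_left[OF assms(1)])
  with assms(2) have "u - v = 0" by blast
  then show ?thesis by simp
qed

lemma cpa_structure_left_mult_derivation:
  assumes "Vector_Spaces.vector_space scale" and "cpa_structure scale br pr"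
  shows "lie_derivation scale br (pr x)"
proof -
  have "Vector_Spaces.linear scale scale (pr x)"
    using assms by (intro Vector_Spaces.linear_iff[THEN iffD2]) (auto simp: cpa_structure_def)
  then show ?thesis using assms(2) by (simp add: lie_derivation_def cpa_structure_def)
qed

lemma cpa_structure_ad_lie_hom:
  assumes L: "lie_algebra scale br" and Z: "\<forall>z. (\<forall>x. br z x = 0) \<longrightarrow> z = 0"
    and P: "cpa_structure scale br pr" and \<phi>: "\<And>x y. pr x y = br (\<phi> x) y"
  shows "lie_hom scale br \<phi>"
proof -
  note inj = centerless_ad_injective[OF L Z]
  have "\<phi> (x + y) = \<phi> x + \<phi> y" for x y
    by (rule inj) (use L P in \<open>simp add: lie_algebra_def cpa_structure_def flip: \<phi>\<close>)
  moreover have "\<phi> (scale c x) = scale c (\<phi> x)" for c x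
    by (rule inj) (use L P in \<open>simp add: lie_algebra_def cpa_structure_def flip: \<phi>\<close>)
  moreover have "\<phi> (br x y) = br (\<phi> x) (\<phi> y)" for x y
  proof (rule inj)
    fix z
    have "pr (br x y) z = pr x (pr y z) - pr y (pr x z)"
      using P unfolding cpa_structure_def by blast
    then show "br (\<phi> (br x y)) z = br (br (\<phi> x) (\<phi> y)) z"
      by (simp only: \<phi> lie_algebra_ad_bracket[OF L])
  qed
  moreover have "Vector_Spaces.vector_space scale" using L by (simp add: lie_algebra_def)
  ultimately show ?thesis
    unfolding lie_hom_def by (auto intro: Vector_Spaces.linear_iff[THEN iffD2])
qed

theorem corollary2p9:
  fixes scale :: "'k::field_char_0 \<Rightarrow> 'v::ab_group_add \<Rightarrow> 'v"
    and br :: "'v \<Rightarrow> 'v \<Rightarrow> 'v"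
    and pr :: "'v \<Rightarrow> 'v \<Rightarrow> 'v"
  assumes "lie_algebra scale br"
    and "finite_dim scale"
    and "complete_lie scale br"
    and "cpa_structure scale br pr"
  shows "inner_cpa scale br pr"
proof -
  have "Vector_Spaces.vector_space scale" using assms(1) by (simp add: lie_algebra_def)
  then have "\<exists>a. pr x = br a" for x
    using cpa_structure_left_mult_derivation assms(3,4)
    unfolding complete_lie_def inner_derivation_def by blast
  then obtain \<phi> where \<phi>: "\<And>x y. pr x y = br (\<phi> x) y" by metis
  have "lie_hom scale br \<phi>"
    using cpa_structure_ad_lie_hom assms(1,3,4) \<phi> unfolding complete_lie_def by blast
  with \<phi> show ?thesis unfolding inner_cpa_def by blast
qed

end
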